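(* Let $X$ be a continuous random variable with absolutely continuous distribution function $F$, density $f$, and reversed hazard rate $\lambda(t)=f(t)/F(t)$. Then for $s>1$ the past entropy generating function satisfies $$\bar B_s(F;t)=(\lambda(t))^{s-1}$$ (for all $t$ in the support) if and only if $X$ is uniformly distributed on $[a,b]$, i.e. $F(x)=\frac{x-a}{b-a}$ for $a\le x\le b$.
   Context: Let $\ell=\inf\{x:F(x)>0\}$. The past entropy generating function is $\bar B_s(F;t)=\int_{\ell}^t\left(\frac{f(x)}{F(t)}\right)^s dx$, $s\ge1$, for $t$ with $F(t)>0$ (for non-negative $X$ this coincides with $\int_0^t (f(x)/F(t))^s dx$). *)

theory Defs
  imports "HOL-Analysis.Analysis"
begin

definition rev_hazard :: "(real \<Rightarrow> real) \<Rightarrow> (real \<Rightarrow> real) \<Rightarrow> real \<Rightarrow> real" where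
  "rev_hazard F f t = f t / F t"

text \<open>Past entropy generating function: integral of (f(x)/F(t))^s over x up to t.
  Since f vanishes a.e. below the left end of the support, integrating over {..t}
  agrees with integrating over [ell, t].\<close>
definition past_egf :: "(real \<Rightarrow> real) \<Rightarrow> (real \<Rightarrow> real) \<Rightarrow> real \<Rightarrow> real \<Rightarrow> real" where
  "past_egf F f s t = (LBINT x:{..t}. (f x / F t) powr s)"

end

theory Submission
  imports Defs "HOL-Probability.Distribution_Functions"
begin

(* Write G(t) for the integral of f^s over (-inf, t]. Where 0 < F < 1, an open interval,
   the identity reads G = f^(s-1) F. There G is finite, so f^(s-1) = G/F is continuous,
   hence f and G' = f^s are continuous too, and (G/F)' = (f^s F - G f)/F^2 = 0. Thus f is
   constant on the interval and F is affine there; by continuity and connectedness F is then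
   affine on the whole stretch where the affine function runs from 0 to 1, i.e. F is the
   uniform distribution function. Conversely, for the uniform law on [a, b] both sides of the
   identity equal (t - a)^(1 - s). *)

lemma set_integral_atMost_split:
  fixes g :: "real \<Rightarrow> real"
  assumes g: "set_integrable lborel {..d} g" and "c \<le> x" and "x \<le> d"
  shows "(LBINT y:{..x}. g y) = (LBINT y:{..c}. g y) + integral {c..x} g"
proof -
  have int_le: "set_integrable lborel {..c} g" and int_gt: "set_integrable lborel {c<..x} g"
    and int_Icc: "set_integrable lborel {c..x} g"
    using \<open>c \<le> x\<close> \<open>x \<le> d\<close> by (auto intro: set_integrable_subset[OF g])
  have "{..x} = {..c} \<union> {c<..x}"
    using \<open>c \<le> x\<close> by auto
  also have "(LBINT y:{..c} \<union> {c<..x}. g y) = (LBINT y:{..c}. g y) + (LBINT y:{c<..x}. g y)"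
    by (rule set_integral_Un[OF _ int_le int_gt]) auto
  also have "(LBINT y:{c<..x}. g y) = (LBINT y:{c..x}. g y)"
    using interval_integral_Ioc[of c x g] interval_integral_Icc[of c x g] \<open>c \<le> x\<close> by simp
  also have "\<dots> = integral {c..x} g"
    by (rule set_borel_integral_eq_integral(2)[OF int_Icc])
  finally show ?thesis .
qed

lemma isCont_set_integral_atMost:
  fixes g :: "real \<Rightarrow> real"
  assumes g: "set_integrable lborel {..d} g" and "y < d"
  shows "isCont (\<lambda>x. LBINT t:{..x}. g t) y"
proof -
  have "g integrable_on {y - 1..d}"
    by (rule set_borel_integral_eq_integral(1), rule set_integrable_subset[OF g]) auto
  then have "continuous_on {y - 1..d} (\<lambda>x. (LBINT t:{..y - 1}. g t) + integral {y - 1..x} g)"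
    by (intro continuous_intros indefinite_integral_continuous_1)
  then have "continuous_on {y - 1..d} (\<lambda>x. LBINT t:{..x}. g t)"
  proof (rule continuous_on_eq)
    fix x assume "x \<in> {y - 1..d}"
    then show "(LBINT t:{..y - 1}. g t) + integral {y - 1..x} g = (LBINT t:{..x}. g t)"
      using set_integral_atMost_split[OF g, of "y - 1" x] by simp
  qed
  then show ?thesis
    using \<open>y < d\<close> by (simp add: continuous_on_interior)
qed

lemma has_real_derivative_set_integral_atMost:
  fixes g :: "real \<Rightarrow> real"
  assumes g: "set_integrable lborel {..d} g" and "y < d" and "isCont g y"
  shows "((\<lambda>x. LBINT t:{..x}. g t) has_real_derivative g y) (at y)"
proof -
  have "g integrable_on {y - 1..d}"
    by (rule set_borel_integral_eq_integral(1), rule set_integrable_subset[OF g]) auto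
  then have "((\<lambda>x. integral {y - 1..x} g) has_vector_derivative g y) (at y within {y - 1..d} - {})"
    by (rule integral_has_vector_derivative_continuous_at)
      (use assms in \<open>auto intro: continuous_at_imp_continuous_at_within\<close>)
  then have "((\<lambda>x. integral {y - 1..x} g) has_real_derivative g y) (at y)"
    using at_within_Icc_at[of "y - 1" y d] \<open>y < d\<close>
    by (simp add: has_real_derivative_iff_has_vector_derivative)
  then have "((\<lambda>x. (LBINT t:{..y - 1}. g t) + integral {y - 1..x} g)
      has_real_derivative g y) (at y)"
    using DERIV_add[OF DERIV_const] by fastforce
  then show ?thesis
  proof (rule has_field_derivative_transform_within_open[where S = "{y - 1<..<d}"])
    fix x assume "x \<in> {y - 1<..<d}"
    then show "(LBINT t:{..y - 1}. g t) + integral {y - 1..x} g = (LBINT t:{..x}. g t)"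
      using set_integral_atMost_split[OF g, of "y - 1" x] by simp
  qed (use \<open>y < d\<close> in auto)
qed

lemma isCont_powr_const:
  fixes g :: "real \<Rightarrow> real"
  assumes "isCont g y" and "\<forall>\<^sub>F x in at y. 0 \<le> g x" and "0 < p"
  shows "isCont (\<lambda>x. g x powr p) y"
  using tendsto_powr'[OF assms(1)[unfolded isCont_def] tendsto_const] assms(2,3)
  by (simp add: isCont_def)

lemma affine_of_constant_derivative:
  fixes F :: "real \<Rightarrow> real"
  assumes "convex C" and "\<And>x. x \<in> C \<Longrightarrow> (F has_real_derivative k) (at x)"
    and "t \<in> C" and "x \<in> C"
  shows "F x = F t + k * (x - t)"
proof -
  have deriv0: "((\<lambda>x. F x - k * x) has_real_derivative 0) (at x within C)" if "x \<in> C" for x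
  proof -
    have "((\<lambda>x. F x - k * x) has_real_derivative k - k) (at x)"
      by (rule DERIV_diff[OF assms(2)[OF that] DERIV_cmult_Id])
    then show ?thesis
      by (simp add: has_field_derivative_at_within)
  qed
  obtain c where "\<forall>x\<in>C. F x - k * x = c"
    using has_field_derivative_zero_constant[OF \<open>convex C\<close> deriv0] by blast
  then show ?thesis
    using \<open>t \<in> C\<close> \<open>x \<in> C\<close> by (auto simp: algebra_simps)
qed

(* Inside the band where the affine g lies strictly between 0 and 1, the closed set
   {F = g} coincides with the open set {0 < F < 1}; connectedness of the band does the rest. *)
lemma agree_on_unit_band:
  fixes F :: "real \<Rightarrow> real" and I :: "real set"
  assumes cont: "continuous_on UNIV F" and I: "is_interval I" and "t \<in> I"
    and "0 < F t" "F t < 1" "0 \<le> k"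
    and affine: "\<And>x. x \<in> I \<Longrightarrow> 0 < F x \<Longrightarrow> F x < 1 \<Longrightarrow> F x = F t + k * (x - t)"
    and x: "x \<in> I" "0 < F t + k * (x - t)" "F t + k * (x - t) < 1"
  shows "F x = F t + k * (x - t)"
proof -
  define g where "g x = F t + k * (x - t)" for x
  define P where "P = {x \<in> I. 0 < g x \<and> g x < 1}"
  define T where "T = P \<inter> {x. F x = g x}"
  have "is_interval P"
    unfolding is_interval_1
  proof (intro ballI allI impI)
    fix a b y assume a: "a \<in> P" and b: "b \<in> P" and y: "a \<le> y \<and> y \<le> b"
    have "g a \<le> g y" "g y \<le> g b"
      using \<open>0 \<le> k\<close> y by (simp_all add: g_def mult_left_mono)
    moreover have "y \<in> I"
      using I a b y unfolding P_def is_interval_1 by blast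
    ultimately show "y \<in> P"
      using a b by (auto simp: P_def)
  qed
  then have "connected P"
    by (simp add: is_interval_connected)
  have "T = P \<inter> {x. 0 < F x \<and> F x < 1}"
  proof (intro set_eqI)
    fix x
    show "x \<in> T \<longleftrightarrow> x \<in> P \<inter> {x. 0 < F x \<and> F x < 1}"
      using affine[of x] by (auto simp: T_def P_def g_def)
  qed
  moreover have "open {x. 0 < F x \<and> F x < 1}"
    by (intro open_Collect_conj open_Collect_less[OF continuous_on_const cont]
        open_Collect_less[OF cont continuous_on_const])
  ultimately have open_T: "openin (top_of_set P) T"
    by (simp add: openin_open_Int)
  have "continuous_on UNIV g"
    unfolding g_def
    by (intro continuous_on_add continuous_on_mult continuous_on_diff continuous_on_const
        continuous_on_id)
  then have closed_T: "closedin (top_of_set P) T"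
    unfolding T_def by (intro closedin_closed_Int closed_Collect_eq[OF cont])
  have "t \<in> T"
    using assms by (simp add: T_def P_def g_def)
  then have "T = P"
    using \<open>connected P\<close> open_T closed_T unfolding connected_clopen by blast
  then show ?thesis
    using x by (auto simp: T_def P_def g_def)
qed

lemma uniform_of_affine_on_unit_band:
  fixes F :: "real \<Rightarrow> real"
  assumes cont: "continuous_on UNIV F" and top: "(F \<longlongrightarrow> 1) at_top"
    and "0 < F t" "F t < 1" "0 \<le> k"
    and affine: "\<And>x. 0 < F x \<Longrightarrow> F x < 1 \<Longrightarrow> F x = F t + k * (x - t)"
  shows "\<exists>a b. a < b \<and> (\<forall>x\<in>{a..b}. F x = (x - a) / (b - a))"
proof -
  have band: "F x = F t + k * (x - t)" if "0 < F t + k * (x - t)" "F t + k * (x - t) < 1" for x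
    using agree_on_unit_band[OF cont is_interval_univ UNIV_I \<open>0 < F t\<close> \<open>F t < 1\<close> \<open>0 \<le> k\<close>]
      affine that by blast
  have "k \<noteq> 0"
  proof
    assume "k = 0"
    have "\<forall>\<^sub>F x in at_top. F x = F t"
      using band \<open>k = 0\<close> \<open>0 < F t\<close> \<open>F t < 1\<close> by simp
    with top have "((\<lambda>_ :: real. F t) \<longlongrightarrow> 1) at_top"
      by (rule Lim_transform_eventually)
    then show False
      using \<open>F t < 1\<close> by (simp add: tendsto_const_iff)
  qed
  then have "0 < k"
    using \<open>0 \<le> k\<close> by simp
  define a where "a = t - F t / k"
  define b where "b = t + (1 - F t) / k"
  have "b - a = 1 / k"
    using \<open>0 < k\<close> by (simp add: a_def b_def field_simps)
  then have "a < b"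
    using \<open>0 < k\<close> by (metis diff_gt_0_iff_gt zero_less_divide_1_iff)
  have affine_ab: "F t + k * (x - t) = (x - a) / (b - a)" for x
    using \<open>0 < k\<close> by (simp add: a_def b_def field_simps)
  have "{a<..<b} \<subseteq> {x. F x = (x - a) / (b - a)}"
  proof
    fix x assume "x \<in> {a<..<b}"
    then have "0 < (x - a) / (b - a)" "(x - a) / (b - a) < 1"
      by (simp_all add: divide_pos_pos)
    then show "x \<in> {x. F x = (x - a) / (b - a)}"
      using band[of x] by (simp add: affine_ab)
  qed
  moreover have "closed {x. F x = (x - a) / (b - a)}"
    by (intro closed_Collect_eq cont continuous_on_divide continuous_on_diff
        continuous_on_id continuous_on_const) (use \<open>a < b\<close> in auto)
  ultimately have "closure {a<..<b} \<subseteq> {x. F x = (x - a) / (b - a)}"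
    by (rule closure_minimal)
  then show ?thesis
    using \<open>a < b\<close> by auto
qed

lemma past_egf_eq_rev_hazard_powr_iff:
  fixes F f :: "real \<Rightarrow> real"
  assumes f_nonneg: "\<And>x. f x \<ge> 0" and "0 < F t"
  shows "past_egf F f s t = rev_hazard F f t powr (s - 1)
    \<longleftrightarrow> (LBINT x:{..t}. f x powr s) = f t powr (s - 1) * F t"
proof -
  have "past_egf F f s t = (LBINT x:{..t}. f x powr s / F t powr s)"
    unfolding past_egf_def using \<open>0 < F t\<close> f_nonneg by (simp add: powr_divide)
  also have "\<dots> = (LBINT x:{..t}. f x powr s) / F t powr s"
    by (simp add: set_lebesgue_integral_def)
  also have "F t powr s = F t powr (s - 1) * F t"
    using powr_add[of "F t" "s - 1" 1] \<open>0 < F t\<close> by simp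
  finally have egf: "past_egf F f s t = (LBINT x:{..t}. f x powr s) / (F t powr (s - 1) * F t)" .
  have hazard: "rev_hazard F f t powr (s - 1) = f t powr (s - 1) / F t powr (s - 1)"
    unfolding rev_hazard_def using \<open>0 < F t\<close> f_nonneg by (simp add: powr_divide)
  have "0 < F t powr (s - 1)"
    using \<open>0 < F t\<close> by simp
  then show ?thesis
    unfolding egf hazard using \<open>0 < F t\<close> by (auto simp: field_simps)
qed

locale abs_continuous_cdf =
  fixes F f :: "real \<Rightarrow> real"
  assumes f_nonneg: "\<And>x. f x \<ge> 0"
    and f_int: "integrable lborel f"
    and f_total: "(LBINT x. f x) = 1"
    and F_def: "\<And>x. F x = (LBINT y:{..x}. f y)"
    and F_deriv: "\<And>t. 0 < F t \<Longrightarrow> F t < 1 \<Longrightarrow> (F has_real_derivative f t) (at t)"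
begin

lemma real_distribution_density: "real_distribution (density lborel f)"
proof -
  have "emeasure (density lborel f) UNIV = 1"
    using f_int f_nonneg f_total by (simp add: emeasure_density nn_integral_eq_integral)
  then have "prob_space (density lborel f)"
    by (intro prob_spaceI) simp
  then show ?thesis
    by (intro real_distribution.intro real_distribution_axioms.intro) simp_all
qed

lemma f_measurable [measurable]: "f \<in> borel_measurable lborel"
  using f_int by (rule borel_measurable_integrable)

lemma set_integrable_density: "A \<in> sets lborel \<Longrightarrow> set_integrable lborel A f"
  unfolding set_integrable_def by (rule integrable_mult_indicator[OF _ f_int])

lemma F_eq_cdf: "F = cdf (density lborel f)"
proof
  fix x
  have int: "integrable lborel (\<lambda>y. indicator {..x} y *\<^sub>R f y)"
    by (rule integrable_mult_indicator) (auto simp: f_int)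
  have "cdf (density lborel f) x = enn2real (\<integral>\<^sup>+ y. ennreal (f y) * indicator {..x} y \<partial>lborel)"
    by (simp add: cdf_def measure_def emeasure_density)
  also have "(\<integral>\<^sup>+ y. ennreal (f y) * indicator {..x} y \<partial>lborel)
      = (\<integral>\<^sup>+ y. ennreal (indicator {..x} y *\<^sub>R f y) \<partial>lborel)"
    by (intro nn_integral_cong) (simp split: split_indicator)
  also have "\<dots> = ennreal (F x)"
    unfolding F_def set_lebesgue_integral_def
    by (rule nn_integral_eq_integral[OF int]) (simp add: f_nonneg)
  moreover have "0 \<le> F x"
    unfolding F_def set_lebesgue_integral_def
    by (intro Bochner_Integration.integral_nonneg) (simp add: f_nonneg split: split_indicator)
  ultimately show "F x = cdf (density lborel f) x"
    by simp
qed

sublocale distribution: real_distribution "density lborel f"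
  by (rule real_distribution_density)

lemma F_mono: "x \<le> y \<Longrightarrow> F x \<le> F y"
  using distribution.cdf_nondecreasing by (simp add: F_eq_cdf)

lemma F_at_top: "(F \<longlongrightarrow> 1) at_top"
  using distribution.cdf_lim_at_top_prob by (simp add: F_eq_cdf)

lemma F_at_bot: "(F \<longlongrightarrow> 0) at_bot"
  using distribution.cdf_lim_at_bot by (simp add: F_eq_cdf)

lemma isCont_F: "isCont F x"
proof -
  have "isCont (\<lambda>x. LBINT y:{..x}. f y) x" for x
    by (rule isCont_set_integral_atMost[where d = "x + 1", OF set_integrable_density]) auto
  moreover have "F = (\<lambda>x. LBINT y:{..x}. f y)"
    by (intro ext F_def)
  ultimately show ?thesis
    by simp
qed

lemma continuous_F: "continuous_on UNIV F"
  by (simp add: continuous_at_imp_continuous_on isCont_F)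

definition inner_support :: "real set" where
  "inner_support = {t. 0 < F t \<and> F t < 1}"

lemma open_inner_support: "open inner_support"
  unfolding inner_support_def
  by (intro open_Collect_conj open_Collect_less[OF continuous_on_const continuous_F]
      open_Collect_less[OF continuous_F continuous_on_const])

lemma convex_inner_support: "convex inner_support"
  unfolding is_interval_convex_1[symmetric] is_interval_1 inner_support_def
  by (auto intro: less_le_trans[OF _ F_mono] le_less_trans[OF F_mono])

lemma inner_support_nonempty: obtains t where "t \<in> inner_support"
proof -
  have "\<forall>\<^sub>F x in at_bot. F x < 1 / 2"
    by (rule order_tendstoD(2)[OF F_at_bot]) simp
  then obtain x0 where x0: "F x0 < 1 / 2"
    using eventually_happens'[OF trivial_limit_at_bot_linorder] by blast
  have "\<forall>\<^sub>F x in at_top. 1 / 2 < F x \<and> x0 \<le> x"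
    by (rule eventually_conj[OF order_tendstoD(1)[OF F_at_top] eventually_ge_at_top]) simp
  then obtain x1 where x1: "1 / 2 < F x1" "x0 \<le> x1"
    using eventually_happens'[OF trivial_limit_at_top_linorder] by blast
  have "\<exists>t\<ge>x0. t \<le> x1 \<and> F t = 1 / 2"
    using x0 x1 isCont_F by (intro IVT) auto
  then obtain t where "F t = 1 / 2"
    by blast
  then have "t \<in> inner_support"
    by (simp add: inner_support_def)
  then show ?thesis
    by (rule that)
qed

lemma inner_support_above:
  assumes "t \<in> inner_support"
  obtains d where "t < d" "d \<in> inner_support"
proof -
  obtain e where "e > 0" "ball t e \<subseteq> inner_support"
    using openE[OF open_inner_support assms] .
  moreover have "t + e / 2 \<in> ball t e"
    using \<open>e > 0\<close> by (simp add: dist_real_def)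
  ultimately show ?thesis
    using that[of "t + e / 2"] by auto
qed

lemma F_affine_where_density_const:
  assumes "convex C" "C \<subseteq> inner_support" "\<And>x. x \<in> C \<Longrightarrow> f x = k" "t \<in> C" "x \<in> C"
  shows "F x = F t + k * (x - t)"
proof (rule affine_of_constant_derivative[OF \<open>convex C\<close> _ \<open>t \<in> C\<close> \<open>x \<in> C\<close>])
  fix y assume "y \<in> C"
  then have "0 < F y" "F y < 1"
    using assms(2) by (auto simp: inner_support_def)
  then show "(F has_real_derivative k) (at y)"
    using F_deriv[of y] assms(3)[OF \<open>y \<in> C\<close>] by simp
qed

lemma density_of_uniform:
  assumes "a < b" and uniform: "\<forall>x\<in>{a..b}. F x = (x - a) / (b - a)" and "a < y" "y < b"
  shows "f y = 1 / (b - a)"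
proof -
  have Fy: "F y = (y - a) / (b - a)"
    using uniform \<open>a < y\<close> \<open>y < b\<close> by simp
  have "0 < F y" "F y < 1"
    unfolding Fy using \<open>a < y\<close> \<open>y < b\<close> by (simp_all add: field_simps)
  then have "(F has_real_derivative f y) (at y)"
    by (rule F_deriv)
  moreover have "((\<lambda>x. (x - a) / (b - a)) has_real_derivative 1 / (b - a)) (at y)"
    using \<open>a < b\<close> by (auto intro!: derivative_eq_intros)
  then have "(F has_real_derivative 1 / (b - a)) (at y)"
    by (rule has_field_derivative_transform_within_open[where S = "{a<..<b}"])
      (use \<open>a < y\<close> \<open>y < b\<close> uniform in auto)
  ultimately show ?thesis
    by (rule DERIV_unique)
qed

lemma density_zero_below:
  assumes "F a = 0"
  shows "AE x in lborel. x \<le> a \<longrightarrow> f x = 0"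
proof -
  have "(\<integral>x. indicator {..a} x * f x \<partial>lborel) = 0"
    using assms F_def[of a] by (simp add: set_lebesgue_integral_def)
  moreover have "integrable lborel (\<lambda>x. indicator {..a} x * f x)"
    using set_integrable_density[of "{..a}"] by (simp add: set_integrable_def)
  ultimately have "AE x in lborel. indicator {..a} x * f x = 0"
    using integral_nonneg_eq_0_iff_AE[of lborel "\<lambda>x. indicator {..a} x * f x"] f_nonneg
    by simp
  then show ?thesis
    by eventually_elim (auto split: split_indicator)
qed

lemma egf_identity_of_uniform:
  assumes "a < b" and uniform: "\<forall>x\<in>{a..b}. F x = (x - a) / (b - a)"
    and "0 < F t" "F t < 1"
  shows "(LBINT x:{..t}. f x powr s) = f t powr (s - 1) * F t"
proof -
  define c where "c = 1 / (b - a)"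
  have "0 < c"
    using \<open>a < b\<close> by (simp add: c_def)
  have "F a = 0" "F b = 1"
    using uniform \<open>a < b\<close> by auto
  then have "a < t" "t < b"
    using F_mono[of t a] F_mono[of b t] \<open>0 < F t\<close> \<open>F t < 1\<close> by linarith+
  have "AE x in lborel. indicator {..t} x *\<^sub>R f x powr s = indicator {a<..t} x * c powr s"
    using density_zero_below[OF \<open>F a = 0\<close>]
  proof eventually_elim
    case (elim x)
    show ?case
    proof (cases "x \<le> a")
      case True
      then show ?thesis
        using elim by (simp split: split_indicator)
    next
      case False
      then show ?thesis
        using density_of_uniform[OF \<open>a < b\<close> uniform, of x] \<open>t < b\<close>
        by (auto simp: c_def split: split_indicator)
    qed
  qed
  then have "(LBINT x:{..t}. f x powr s) = (\<integral>x. indicator {a<..t} x * c powr s \<partial>lborel)"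
    unfolding set_lebesgue_integral_def by (intro integral_cong_AE) auto
  also have "\<dots> = (t - a) * c powr s"
    using \<open>a < t\<close> by simp
  also have "\<dots> = c powr (s - 1) * ((t - a) * c)"
    using powr_add[of c "s - 1" 1] \<open>0 < c\<close> by simp
  also have "\<dots> = f t powr (s - 1) * F t"
    using density_of_uniform[OF \<open>a < b\<close> uniform \<open>a < t\<close> \<open>t < b\<close>] uniform \<open>a < t\<close> \<open>t < b\<close>
    by (simp add: c_def)
  finally show ?thesis .
qed

end

locale egf_hazard_identity = abs_continuous_cdf +
  fixes s :: real
  assumes s_gt_1: "1 < s"
    and egf_identity:
      "\<And>t. 0 < F t \<Longrightarrow> F t < 1 \<Longrightarrow> (LBINT x:{..t}. f x powr s) = f t powr (s - 1) * F t"
begin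

lemma set_integrable_density_powr:
  assumes "t \<in> inner_support"
  shows "set_integrable lborel {..t} (\<lambda>x. f x powr s)"
proof (rule ccontr)
  (* Otherwise the left-hand side of the identity vanishes to the right of t, hence so
     does f, and F could never climb from F t to 1. *)
  assume not_int: "\<not> ?thesis"
  define C where "C = inner_support \<inter> {t..}"
  have f_zero: "f x = 0" if "x \<in> C" for x
  proof -
    have "\<not> set_integrable lborel {..x} (\<lambda>x. f x powr s)"
      using not_int set_integrable_subset[of lborel "{..x}" _ "{..t}"] that by (auto simp: C_def)
    then have "(LBINT y:{..x}. f y powr s) = 0"
      unfolding set_lebesgue_integral_def set_integrable_def by (rule not_integrable_integral_eq)
    then show ?thesis
      using egf_identity[of x] that by (simp add: C_def inner_support_def)
  qed
  have flat: "F x = F t + 0 * (x - t)" if "x \<in> {t..}" "0 < F x" "F x < 1" for x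
  proof (rule F_affine_where_density_const[OF _ _ f_zero])
    show "convex C"
      unfolding C_def by (intro convex_Int convex_inner_support convex_real_interval)
    show "t \<in> C" "x \<in> C"
      using assms that by (simp_all add: C_def inner_support_def)
  qed (simp add: C_def)
  have flat_right: "F x = F t" if "t \<le> x" for x
  proof -
    have "F x = F t + 0 * (x - t)"
      by (rule agree_on_unit_band[where I = "{t..}" and k = 0, OF continuous_F _ _ _ _ _ flat])
        (use assms that in \<open>simp_all add: inner_support_def\<close>)
    then show ?thesis
      by simp
  qed
  have "\<forall>\<^sub>F x in at_top. F x = F t"
    by (rule eventually_mono[OF eventually_ge_at_top flat_right])
  with F_at_top have "((\<lambda>_ :: real. F t) \<longlongrightarrow> 1) at_top"
    by (rule Lim_transform_eventually)
  then show False
    using assms by (simp add: tendsto_const_iff inner_support_def)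
qed

lemma isCont_density:
  assumes "y \<in> inner_support"
  shows "isCont f y"
proof -
  obtain d where "y < d" "d \<in> inner_support"
    using inner_support_above[OF assms] .
  define q where "q x = (LBINT t:{..x}. f t powr s) / F x" for x
  have q_eq: "q x = f x powr (s - 1)" if "x \<in> inner_support" for x
    using egf_identity[of x] that by (simp add: q_def inner_support_def)
  have "isCont (\<lambda>x. LBINT t:{..x}. f t powr s) y"
    using set_integrable_density_powr[OF \<open>d \<in> inner_support\<close>] \<open>y < d\<close>
    by (rule isCont_set_integral_atMost)
  then have "isCont q y"
    unfolding q_def using assms by (intro isCont_divide isCont_F) (simp_all add: inner_support_def)
  moreover have "\<forall>\<^sub>F x in at y. 0 \<le> q x"
    using eventually_at_in_open'[OF open_inner_support assms] by eventually_elim (simp add: q_eq)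
  ultimately have "isCont (\<lambda>x. q x powr (1 / (s - 1))) y"
    using s_gt_1 by (intro isCont_powr_const) simp_all
  moreover have f_eq: "\<forall>\<^sub>F x in nhds y. f x = q x powr (1 / (s - 1))"
    using eventually_nhds_in_open[OF open_inner_support assms]
    by eventually_elim (use s_gt_1 f_nonneg in \<open>simp add: q_eq powr_powr\<close>)
  ultimately show ?thesis
    using isCont_cong[OF f_eq] by simp
qed

lemma density_constant: "\<exists>k. \<forall>t\<in>inner_support. f t = k"
proof -
  define G where "G x = (LBINT t:{..x}. f t powr s)" for x
  define q where "q x = G x / F x" for x
  have q_deriv: "(q has_real_derivative 0) (at y within inner_support)"
    if y: "y \<in> inner_support" for y
  proof -
    obtain d where "y < d" "d \<in> inner_support"
      using inner_support_above[OF y] .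
    have "isCont (\<lambda>x. f x powr s) y"
      using isCont_density[OF y] s_gt_1 f_nonneg by (intro isCont_powr_const) simp_all
    with set_integrable_density_powr[OF \<open>d \<in> inner_support\<close>] \<open>y < d\<close>
    have "(G has_real_derivative f y powr s) (at y)"
      unfolding G_def[abs_def] by (rule has_real_derivative_set_integral_atMost)
    moreover have "(F has_real_derivative f y) (at y)" "F y \<noteq> 0"
      using F_deriv y by (auto simp: inner_support_def)
    ultimately have "(q has_real_derivative (f y powr s * F y - G y * f y) / (F y * F y)) (at y)"
      unfolding q_def[abs_def] by (rule DERIV_divide)
    moreover have "f y powr s = f y powr (s - 1) * f y"
      using powr_add[of "f y" "s - 1" 1] f_nonneg[of y] by simp
    moreover have "G y = f y powr (s - 1) * F y"
      using egf_identity y by (simp add: G_def inner_support_def)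
    ultimately show ?thesis
      by (simp add: has_field_derivative_at_within)
  qed
  obtain c where c: "\<And>t. t \<in> inner_support \<Longrightarrow> q t = c"
    using has_field_derivative_zero_constant[OF convex_inner_support q_deriv] by blast
  have "f t = c powr (1 / (s - 1))" if "t \<in> inner_support" for t
  proof -
    have "c = f t powr (s - 1)"
      using c[OF that] egf_identity that by (simp add: q_def G_def inner_support_def)
    then show ?thesis
      using s_gt_1 f_nonneg[of t] by (simp add: powr_powr)
  qed
  then show ?thesis
    by blast
qed

lemma uniform_cdf: "\<exists>a b. a < b \<and> (\<forall>x\<in>{a..b}. F x = (x - a) / (b - a))"
proof -
  obtain k where k: "\<And>t. t \<in> inner_support \<Longrightarrow> f t = k"
    using density_constant by blast
  obtain t where t: "t \<in> inner_support"
    by (rule inner_support_nonempty)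
  have "0 \<le> k"
    using k[OF t] f_nonneg[of t] by simp
  show ?thesis
  proof (rule uniform_of_affine_on_unit_band[OF continuous_F F_at_top _ _ \<open>0 \<le> k\<close>])
    show "0 < F t" "F t < 1"
      using t by (simp_all add: inner_support_def)
    show "F x = F t + k * (x - t)" if "0 < F x" "F x < 1" for x
    proof (rule F_affine_where_density_const[OF convex_inner_support order_refl k t])
      show "x \<in> inner_support"
        using that by (simp add: inner_support_def)
    qed
  qed
qed

end

theorem theorem3p2:
  fixes F f :: "real \<Rightarrow> real" and s :: real
  assumes s_gt: "s > 1"
    and f_nonneg: "\<And>x. f x \<ge> 0"
    and f_meas: "f \<in> borel_measurable lborel"
    and f_int: "integrable lborel f"
    and f_total: "(LBINT x. f x) = 1"
    and F_def: "\<And>x. F x = (LBINT y:{..x}. f y)"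
    and f_deriv: "\<And>t. 0 < F t \<Longrightarrow> F t < 1 \<Longrightarrow> (F has_real_derivative f t) (at t)"
  shows "(\<forall>t. 0 < F t \<and> F t < 1 \<longrightarrow> past_egf F f s t = rev_hazard F f t powr (s - 1))
         \<longleftrightarrow> (\<exists>a b. a < b \<and> (\<forall>x\<in>{a..b}. F x = (x - a) / (b - a)))"
proof -
  interpret abs_continuous_cdf F f
    using f_nonneg f_int f_total F_def f_deriv by unfold_locales
  have egf_iff: "past_egf F f s t = rev_hazard F f t powr (s - 1)
      \<longleftrightarrow> (LBINT x:{..t}. f x powr s) = f t powr (s - 1) * F t" if "0 < F t" for t
    using f_nonneg that by (rule past_egf_eq_rev_hazard_powr_iff)
  show ?thesis
  proof
    assume "\<forall>t. 0 < F t \<and> F t < 1 \<longrightarrow> past_egf F f s t = rev_hazard F f t powr (s - 1)"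
    then interpret egf_hazard_identity F f s
      by (intro egf_hazard_identity.intro egf_hazard_identity_axioms.intro
          abs_continuous_cdf_axioms s_gt) (simp add: egf_iff)
    show "\<exists>a b. a < b \<and> (\<forall>x\<in>{a..b}. F x = (x - a) / (b - a))"
      by (rule uniform_cdf)
  next
    assume "\<exists>a b. a < b \<and> (\<forall>x\<in>{a..b}. F x = (x - a) / (b - a))"
    then show "\<forall>t. 0 < F t \<and> F t < 1 \<longrightarrow> past_egf F f s t = rev_hazard F f t powr (s - 1)"
      using egf_identity_of_uniform egf_iff by blast
  qed
qed

end
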